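(* Consider the Cannings model described in the context and suppose $\lim_{N\to\infty}c_N=0$. Then there exists a sequence of positive numbers $(a_N)_{N\ge1}$ such that: \begin{enumerate} \item $S_N/a_N\to1$ in probability as $N\to\infty$; \item there exists $\delta>0$ such that $\lim_{N\to\infty}c_N^{-1}\,\mathbb{P}\big(S_N-\max_{1\le k\le N}X_{k,N}<\delta a_N\big)=0$. \end{enumerate}
   Context: Cannings model with i.i.d. offspring numbers and sampling: for each $N$, let $X_{1,N},\dots,X_{N,N}$ be i.i.d. random variables with values in $\{1,2,\dots\}$, and $S_N=X_{1,N}+\cdots+X_{N,N}$. Conditionally on these, $N$ of the $S_N$ offspring are sampled uniformly without replacement to form the next generation, and $\nu_{k,N}$ is the number of sampled offspring of the $k$th individual. $(x)_k$ is the falling factorial and $c_N=E[(\nu_{1,N})_2]/(N-1)$. *)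

theory Defs
  imports "HOL-Probability.Probability"
begin

definition ff2 :: "nat \<Rightarrow> real" where
  "ff2 n = real n * (real n - 1)"

definition offspring :: "nat \<Rightarrow> nat pmf \<Rightarrow> (nat \<Rightarrow> nat) pmf" where
  "offspring N q = Pi_pmf {..<N} 0 (\<lambda>_. q)"

definition S_tot :: "nat \<Rightarrow> (nat \<Rightarrow> nat) \<Rightarrow> nat" where
  "S_tot N x = (\<Sum>k<N. x k)"

definition Max_off :: "nat \<Rightarrow> (nat \<Rightarrow> nat) \<Rightarrow> nat" where
  "Max_off N x = Max (x ` {..<N})"

definition pool :: "nat \<Rightarrow> (nat \<Rightarrow> nat) \<Rightarrow> (nat \<times> nat) set" where
  "pool N x = {(k, i). k < N \<and> i < x k}"

text \<open>Joint model: offspring numbers, then a uniform sample of N of the S_N offspring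
  without replacement (a uniformly random N-element subset of the pool).\<close>
definition cannings :: "nat \<Rightarrow> nat pmf \<Rightarrow> ((nat \<Rightarrow> nat) \<times> (nat \<times> nat) set) pmf" where
  "cannings N q = do {
     x \<leftarrow> offspring N q;
     A \<leftarrow> pmf_of_set {A. A \<subseteq> pool N x \<and> card A = N};
     return_pmf (x, A) }"

definition nu :: "nat \<Rightarrow> (nat \<times> nat) set \<Rightarrow> nat" where
  "nu k A = card {i. (k, i) \<in> A}"

text \<open>c_N = E[(nu_{1,N})_2] / (N - 1); the first individual has index 0.\<close>
definition cN :: "nat \<Rightarrow> nat pmf \<Rightarrow> real" where
  "cN N q = measure_pmf.expectation (cannings N q) (\<lambda>(x, A). ff2 (nu 0 A)) / (real N - 1)"

end

theory Submission
  imports Defs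
begin

text \<open>Write the offspring numbers as X = 1 + Y and let m be a median of S_N. The sampling formula
  c_N = N E[(X_1)_2 / (S_N)_2], restricted to the event that the other N - 1 individuals have at
  most m offspring in total (probability at least 1/2 and independent of X_1), gives the truncated
  second moment bound N E[min(Y, m)^2] <= 18 c_N m^2. So with probability 1 - O(c_N) no Y_k
  exceeds m, and by Chebyshev the truncated sum is within e m of its mean; comparing with the
  median gives N + N E[min(Y, m)] = m (1 + o(1)), hence S_N / m -> 1 in probability.
  If S_N - max_k X_k < m/8, then the sum of the Y_k truncated at m/8 lies a distance of order m
  below its mean, and a Chernoff bound makes this exp(-1/(576 c_N)) = o(c_N).\<close>

section \<open>Sampling without replacement\<close>

definition off_diag :: "'a set \<Rightarrow> ('a \<times> 'a) set" where
  "off_diag C = {(a, b). a \<in> C \<and> b \<in> C \<and> a \<noteq> b}"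

lemma ff2_card_eq_card_off_diag:
  assumes "finite C"
  shows "ff2 (card C) = real (card (off_diag C))"
proof -
  have "off_diag C = C \<times> C - (\<lambda>a. (a, a)) ` C" by (auto simp: off_diag_def)
  moreover have "card ((\<lambda>a. (a, a)) ` C) = card C" by (simp add: card_image inj_on_def)
  ultimately have "card (off_diag C) = card C * card C - card C"
    using assms by (simp add: card_Diff_subset card_cartesian_product image_subset_iff)
  thus ?thesis by (simp add: ff2_def of_nat_diff algebra_simps)
qed

lemma card_subsets_containing_pair:
  assumes P: "finite P" and ab: "a \<in> P" "b \<in> P" "a \<noteq> b" and k: "k \<ge> 2"
  shows "card {A. A \<subseteq> P \<and> card A = k \<and> a \<in> A \<and> b \<in> A} = (card P - 2) choose (k - 2)"
proof -
  have "bij_betw (\<lambda>B. B \<union> {a,b}) {B. B \<subseteq> P - {a,b} \<and> card B = k - 2}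
        {A. A \<subseteq> P \<and> card A = k \<and> a \<in> A \<and> b \<in> A}"
  proof (rule bij_betw_byWitness[where f' = "\<lambda>A. A - {a,b}"])
    show "\<forall>B\<in>{B. B \<subseteq> P - {a, b} \<and> card B = k - 2}. B \<union> {a, b} - {a, b} = B" by auto
    show "\<forall>A\<in>{A. A \<subseteq> P \<and> card A = k \<and> a \<in> A \<and> b \<in> A}. A - {a, b} \<union> {a, b} = A" by auto
    show "(\<lambda>B. B \<union> {a, b}) ` {B. B \<subseteq> P - {a, b} \<and> card B = k - 2}
      \<subseteq> {A. A \<subseteq> P \<and> card A = k \<and> a \<in> A \<and> b \<in> A}"
    proof (rule image_subsetI)
      fix B assume "B \<in> {B. B \<subseteq> P - {a, b} \<and> card B = k - 2}"
      hence B: "B \<subseteq> P - {a,b}" "card B = k - 2" by auto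
      have fB: "finite B" using B P finite_subset by blast
      have "card (B \<union> {a,b}) = card B + card {a,b}" using B fB by (intro card_Un_disjoint) auto
      hence "card (B \<union> {a,b}) = k" using B ab k by simp
      thus "B \<union> {a,b} \<in> {A. A \<subseteq> P \<and> card A = k \<and> a \<in> A \<and> b \<in> A}" using B ab by auto
    qed
    show "(\<lambda>A. A - {a, b}) ` {A. A \<subseteq> P \<and> card A = k \<and> a \<in> A \<and> b \<in> A}
      \<subseteq> {B. B \<subseteq> P - {a, b} \<and> card B = k - 2}"
    proof (rule image_subsetI)
      fix A assume "A \<in> {A. A \<subseteq> P \<and> card A = k \<and> a \<in> A \<and> b \<in> A}"
      hence A: "A \<subseteq> P" "card A = k" "a \<in> A" "b \<in> A" by auto
      have "finite A" using A P finite_subset by blast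
      hence "card (A - {a,b}) = card A - 2" using A ab by (simp add: card_Diff_subset)
      thus "A - {a,b} \<in> {B. B \<subseteq> P - {a, b} \<and> card B = k - 2}" using A by auto
    qed
  qed
  hence "card {A. A \<subseteq> P \<and> card A = k \<and> a \<in> A \<and> b \<in> A} = card {B. B \<subseteq> P - {a,b} \<and> card B = k - 2}"
    by (simp add: bij_betw_same_card)
  also have "\<dots> = card (P - {a,b}) choose (k - 2)" using P by (intro n_subsets) auto
  also have "card (P - {a,b}) = card P - 2" using P ab by (simp add: card_Diff_subset)
  finally show ?thesis .
qed

lemma sum_ff2_card_Int_subsets:
  assumes P: "finite P" and B: "B \<subseteq> P" and k: "k \<ge> 2"
  shows "(\<Sum>A | A \<subseteq> P \<and> card A = k. ff2 (card (A \<inter> B)))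
       = ff2 (card B) * ((card P - 2) choose (k - 2))"
proof -
  define F where "F = {A. A \<subseteq> P \<and> card A = k}"
  have fin: "finite F" "finite B" "finite (off_diag B)"
    using P B finite_subset[of "off_diag B" "B \<times> B"]
    by (auto simp: F_def off_diag_def finite_subset[OF _ P])
  have "(\<Sum>A\<in>F. ff2 (card (A \<inter> B))) = (\<Sum>A\<in>F. \<Sum>p\<in>off_diag B. of_bool (fst p \<in> A \<and> snd p \<in> A))"
  proof (rule sum.cong[OF refl])
    fix A
    have "off_diag (A \<inter> B) = {p \<in> off_diag B. fst p \<in> A \<and> snd p \<in> A}"
      by (auto simp: off_diag_def)
    thus "ff2 (card (A \<inter> B)) = (\<Sum>p\<in>off_diag B. of_bool (fst p \<in> A \<and> snd p \<in> A))"
      using fin by (simp add: ff2_card_eq_card_off_diag sum.If_cases Int_def)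
  qed
  also have "\<dots> = (\<Sum>p\<in>off_diag B. \<Sum>A\<in>F. of_bool (fst p \<in> A \<and> snd p \<in> A))"
    by (rule sum.swap)
  also have "\<dots> = (\<Sum>p\<in>off_diag B. real ((card P - 2) choose (k - 2)))"
  proof (rule sum.cong[OF refl], clarify)
    fix a b assume "(a, b) \<in> off_diag B"
    hence ab: "a \<in> P" "b \<in> P" "a \<noteq> b" using B by (auto simp: off_diag_def)
    have "{A \<in> F. a \<in> A \<and> b \<in> A} = {A. A \<subseteq> P \<and> card A = k \<and> a \<in> A \<and> b \<in> A}"
      by (auto simp: F_def)
    thus "(\<Sum>A\<in>F. of_bool (fst (a, b) \<in> A \<and> snd (a, b) \<in> A)) = real ((card P - 2) choose (k - 2))"
      using fin card_subsets_containing_pair[OF P ab k] by (simp add: sum.If_cases Int_def)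
  qed
  finally show ?thesis using fin by (simp add: F_def ff2_card_eq_card_off_diag)
qed

lemma binomial_minus_two_div_binomial:
  assumes "2 \<le> k" "k \<le> n"
  shows "real ((n - 2) choose (k - 2)) / real (n choose k) = ff2 k / ff2 n"
proof -
  have step: "(Suc (Suc a) choose Suc (Suc b)) * (Suc (Suc b) * Suc b) = Suc (Suc a) * Suc a * (a choose b)"
    for a b :: nat
  proof -
    have "(Suc (Suc a) choose Suc (Suc b)) * (Suc (Suc b) * Suc b)
        = Suc (Suc a) * ((Suc a choose Suc b) * Suc b)"
      by (simp only: mult.assoc[symmetric] Suc_times_binomial_eq[of "Suc a" "Suc b", symmetric])
    also have "\<dots> = Suc (Suc a) * Suc a * (a choose b)"
      by (simp only: mult.assoc Suc_times_binomial_eq[of a b, symmetric])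
    finally show ?thesis .
  qed
  obtain a b where ab: "n = Suc (Suc a)" "k = Suc (Suc b)"
  proof -
    obtain a b where "n = 2 + a" "k = 2 + b" using assms le_Suc_ex order_trans by metis
    thus ?thesis using that by simp
  qed
  have eq: "real (n choose k) * ff2 k = ff2 n * real ((n - 2) choose (k - 2))"
    using arg_cong[OF step[of a b], of real] unfolding ab ff2_def by (simp add: algebra_simps)
  have "n choose k > 0" "ff2 n > 0" using assms by (auto simp: ff2_def)
  thus ?thesis using eq by (simp add: field_simps)
qed

lemma pool_eq_Sigma: "pool N x = Sigma {..<N} (\<lambda>k. {..<x k})"
  by (auto simp: pool_def)

lemma finite_pool: "finite (pool N x)"
  by (simp add: pool_eq_Sigma)

lemma card_pool: "card (pool N x) = S_tot N x"
  by (simp add: pool_eq_Sigma S_tot_def card_SigmaI)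

lemma S_tot_ge: "(\<And>k. k < N \<Longrightarrow> 1 \<le> x k) \<Longrightarrow> N \<le> S_tot N x"
  using sum_mono[of "{..<N}" "\<lambda>_. 1::nat" x] by (simp add: S_tot_def)

lemma S_tot_eq_first_plus_rest: "1 \<le> N \<Longrightarrow> S_tot N x = x 0 + (\<Sum>k\<in>{1..<N}. x k)"
  by (simp add: S_tot_def atLeast1_lessThan_eq_remove0 sum.remove)

lemma nu_le_card: "finite A \<Longrightarrow> nu k A \<le> card A"
proof -
  assume "finite A"
  moreover have "nu k A = card (Pair k ` {i. (k, i) \<in> A})"
    unfolding nu_def by (simp add: card_image inj_on_def)
  ultimately show ?thesis using card_mono[of A "Pair k ` {i. (k, i) \<in> A}"] by auto
qed

lemma ff2_nonneg: "0 \<le> ff2 n"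
  by (cases n) (auto simp: ff2_def)

lemma ff2_mono: "a \<le> b \<Longrightarrow> ff2 a \<le> ff2 b"
  using ff2_nonneg[of b] by (cases a) (auto simp: ff2_def intro!: mult_mono)

lemma ff2_le_square: "n \<le> N \<Longrightarrow> ff2 n \<le> real N * real N"
  unfolding ff2_def by (cases n) (auto intro!: mult_mono)

lemma expectation_ff2_nu_uniform_subset:
  assumes N: "N \<ge> 2" and x: "\<And>k. k < N \<Longrightarrow> 1 \<le> x k"
  shows "measure_pmf.expectation (pmf_of_set {A. A \<subseteq> pool N x \<and> card A = N}) (\<lambda>A. ff2 (nu 0 A))
     = ff2 (x 0) * ff2 N / ff2 (S_tot N x)"
proof -
  define P where "P = pool N x"
  define F where "F = {A. A \<subseteq> P \<and> card A = N}"
  define B where "B = {0::nat} \<times> {..<x 0}"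
  have P: "finite P" "card P = S_tot N x" "N \<le> card P"
    using S_tot_ge[OF x] by (simp_all add: P_def finite_pool card_pool)
  have F: "finite F" "card F = card P choose N" "F \<noteq> {}"
    using P n_subsets[OF P(1), of N] obtain_subset_with_card_n[OF P(3)]
    by (auto simp: F_def intro: finite_subset[of _ "Pow P"])
  have "B \<subseteq> P" using N x by (auto simp: B_def P_def pool_def)
  have nu: "nu 0 A = card (A \<inter> B)" if "A \<in> F" for A
  proof -
    have "bij_betw (Pair 0) {i. (0, i) \<in> A} (A \<inter> B)"
      using that by (auto simp: bij_betw_def inj_on_def F_def B_def P_def pool_def)
    thus ?thesis unfolding nu_def by (rule bij_betw_same_card)
  qed
  have "measure_pmf.expectation (pmf_of_set F) (\<lambda>A. ff2 (nu 0 A)) = (\<Sum>A\<in>F. ff2 (card (A \<inter> B))) / card F"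
    using F nu by (simp add: integral_pmf_of_set)
  also have "\<dots> = ff2 (x 0) * (real ((card P - 2) choose (N - 2)) / real (card P choose N))"
    using sum_ff2_card_Int_subsets[OF P(1) \<open>B \<subseteq> P\<close> N] F by (simp add: F_def B_def)
  also have "\<dots> = ff2 (x 0) * ff2 N / ff2 (S_tot N x)"
    using binomial_minus_two_div_binomial[OF N P(3)] P by simp
  finally show ?thesis by (simp add: F_def P_def)
qed

lemma integrable_measure_pmf_bounded:
  fixes f :: "'a \<Rightarrow> real"
  assumes "\<And>x. x \<in> set_pmf p \<Longrightarrow> \<bar>f x\<bar> \<le> B"
  shows "integrable (measure_pmf p) f"
  by (rule measure_pmf.integrable_const_bound[where B=B])
     (use assms in \<open>auto simp: AE_measure_pmf_iff\<close>)

lemma expectation_cong_set_pmf: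
  "(\<And>x. x \<in> set_pmf p \<Longrightarrow> f x = g x) \<Longrightarrow> measure_pmf.expectation p f = measure_pmf.expectation p g"
  by (intro integral_cong_AE) (auto simp: AE_measure_pmf_iff)

lemma expectation_bind_pmf:
  fixes f :: "'b \<Rightarrow> real"
  assumes f: "\<And>y. y \<in> set_pmf (bind_pmf M K) \<Longrightarrow> 0 \<le> f y \<and> f y \<le> B"
  shows "measure_pmf.expectation (bind_pmf M K) f
       = measure_pmf.expectation M (\<lambda>x. measure_pmf.expectation (K x) f)"
proof -
  have fK: "0 \<le> f y \<and> f y \<le> B" if "x \<in> set_pmf M" "y \<in> set_pmf (K x)" for x y
    using f that by auto
  have intK: "integrable (K x) f" if "x \<in> set_pmf M" for x
    by (rule integrable_measure_pmf_bounded[where B=B]) (use fK that in fastforce)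
  have g: "0 \<le> measure_pmf.expectation (K x) f \<and> measure_pmf.expectation (K x) f \<le> B"
    if "x \<in> set_pmf M" for x
  proof
    show "0 \<le> measure_pmf.expectation (K x) f"
      by (intro integral_nonneg_AE) (use fK that in \<open>auto simp: AE_measure_pmf_iff\<close>)
    have "measure_pmf.expectation (K x) f \<le> measure_pmf.expectation (K x) (\<lambda>_. B)"
      by (intro integral_mono_AE intK that) (use fK that in \<open>auto simp: AE_measure_pmf_iff\<close>)
    thus "measure_pmf.expectation (K x) f \<le> B" by simp
  qed
  have "ennreal (measure_pmf.expectation (bind_pmf M K) f) = (\<integral>\<^sup>+y. ennreal (f y) \<partial>bind_pmf M K)"
    by (rule nn_integral_eq_integral[symmetric])
       (use f in \<open>auto simp: AE_measure_pmf_iff intro!: integrable_measure_pmf_bounded[where B=B]\<close>)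
  also have "\<dots> = (\<integral>\<^sup>+x. \<integral>\<^sup>+y. ennreal (f y) \<partial>K x \<partial>M)" by simp
  also have "\<dots> = (\<integral>\<^sup>+x. ennreal (measure_pmf.expectation (K x) f) \<partial>M)"
    by (intro nn_integral_cong_AE)
       (auto simp: AE_measure_pmf_iff fK intK intro!: nn_integral_eq_integral)
  also have "\<dots> = ennreal (measure_pmf.expectation M (\<lambda>x. measure_pmf.expectation (K x) f))"
    by (rule nn_integral_eq_integral)
       (use g in \<open>auto simp: AE_measure_pmf_iff intro!: integrable_measure_pmf_bounded[where B=B]\<close>)
  finally show ?thesis
    using g fK by (subst (asm) ennreal_inj) (auto intro!: integral_nonneg_AE simp: AE_measure_pmf_iff)
qed

lemma offspring_ge_1:
  assumes "x \<in> set_pmf (offspring N q)" "set_pmf q \<subseteq> {1..}" "k < N"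
  shows "1 \<le> x k"
  using assms by (auto simp: offspring_def set_Pi_pmf PiE_dflt_def subset_iff)

lemma cN_eq_expectation_offspring:
  assumes N: "N \<ge> 2" and q: "set_pmf q \<subseteq> {1..}"
  shows "cN N q = real N * measure_pmf.expectation (offspring N q) (\<lambda>x. ff2 (x 0) / ff2 (S_tot N x))"
proof -
  define F where "F x = {A. A \<subseteq> pool N x \<and> card A = N}" for x
  have cannings: "cannings N q = bind_pmf (offspring N q) (\<lambda>x. map_pmf (Pair x) (pmf_of_set (F x)))"
    unfolding cannings_def F_def map_pmf_def by simp
  have F: "finite (F x) \<and> F x \<noteq> {}" if "x \<in> set_pmf (offspring N q)" for x
  proof -
    have "N \<le> card (pool N x)"
      using S_tot_ge[of N x] offspring_ge_1[OF that q] by (simp add: card_pool)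
    thus ?thesis using obtain_subset_with_card_n[of N "pool N x"] finite_pool[of N x]
      by (auto simp: F_def intro: finite_subset[of _ "Pow (pool N x)"])
  qed
  have bound: "0 \<le> ff2 (nu 0 A) \<and> ff2 (nu 0 A) \<le> real N * real N"
    if "(x, A) \<in> set_pmf (cannings N q)" for x A
  proof -
    have "A \<in> F x" "finite (F x)" "F x \<noteq> {}" using that F by (auto simp: cannings)
    hence "nu 0 A \<le> N"
      using nu_le_card[of A 0] finite_pool[of N x] by (auto simp: F_def intro: finite_subset)
    thus ?thesis by (simp add: ff2_nonneg ff2_le_square)
  qed
  have "measure_pmf.expectation (cannings N q) (\<lambda>(x, A). ff2 (nu 0 A))
      = measure_pmf.expectation (offspring N q)
          (\<lambda>x. measure_pmf.expectation (pmf_of_set (F x)) (\<lambda>A. ff2 (nu 0 A)))"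
    unfolding cannings using bound unfolding cannings
    by (subst expectation_bind_pmf[where B = "real N * real N"]) auto
  also have "\<dots> = measure_pmf.expectation (offspring N q) (\<lambda>x. ff2 N * (ff2 (x 0) / ff2 (S_tot N x)))"
    unfolding F_def
    by (intro expectation_cong_set_pmf)
       (subst expectation_ff2_nu_uniform_subset[OF N], auto dest: offspring_ge_1[OF _ q])
  also have "\<dots> = ff2 N * measure_pmf.expectation (offspring N q) (\<lambda>x. ff2 (x 0) / ff2 (S_tot N x))"
    by (simp only: integral_mult_right_zero)
  finally show ?thesis using N by (simp add: cN_def ff2_def)
qed

lemma cN_nonneg:
  assumes "N \<ge> 2" "set_pmf q \<subseteq> {1..}"
  shows "0 \<le> cN N q"
  by (simp add: cN_eq_expectation_offspring[OF assms] ff2_nonneg)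

section \<open>Independent offspring numbers\<close>

lemma expectation_offspring_component:
  fixes g :: "nat \<Rightarrow> real"
  assumes "k < N"
  shows "measure_pmf.expectation (offspring N q) (\<lambda>x. g (x k)) = measure_pmf.expectation q g"
proof -
  have "map_pmf (\<lambda>x. x k) (offspring N q) = q"
    unfolding offspring_def using assms by (subst Pi_pmf_component) auto
  hence "measure_pmf.expectation (map_pmf (\<lambda>x. x k) (offspring N q)) g = measure_pmf.expectation q g" by simp
  thus ?thesis by simp
qed

lemma expectation_offspring_pair:
  fixes g :: "nat \<Rightarrow> real"
  assumes jk: "j < N" "k < N" "j \<noteq> k" and g0: "\<And>v. 0 \<le> g v" and gB: "\<And>v. g v \<le> B"
  shows "measure_pmf.expectation (offspring N q) (\<lambda>x. g (x j) * g (x k)) = (measure_pmf.expectation q g)^2"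
proof -
  define f where "f i v = (if i \<in> {j,k} then g v else 1)" for i v
  have f1: "i \<notin> {j,k} \<Longrightarrow> f i = (\<lambda>_. 1)" for i by (auto simp: f_def)
  have int: "integrable (measure_pmf q) (f i)" for i
    unfolding f_def
      by (rule integrable_measure_pmf_bounded[where B="max B 1"])
         (use g0 gB in \<open>auto simp: abs_of_nonneg intro: max.coboundedI1\<close>)
  have "measure_pmf.expectation (offspring N q) (\<lambda>x. \<Prod>i\<in>{..<N}. f i (x i))
      = (\<Prod>i\<in>{..<N}. measure_pmf.expectation q (f i))"
    unfolding offspring_def by (rule expectation_prod_Pi_pmf) (simp, rule int, simp add: f_def g0)
  moreover have "(\<lambda>x. \<Prod>i\<in>{..<N}. f i (x i)) = (\<lambda>x. g (x j) * g (x k))"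
  proof
    fix x
    have "(\<Prod>i\<in>{..<N}. f i (x i)) = (\<Prod>i\<in>{j,k}. f i (x i))"
      by (rule prod.mono_neutral_right) (use jk in \<open>auto simp: f_def\<close>)
    also have "\<dots> = g (x j) * g (x k)" using jk by (simp add: f_def)
    finally show "(\<Prod>i\<in>{..<N}. f i (x i)) = g (x j) * g (x k)" .
  qed
  moreover have "(\<Prod>i\<in>{..<N}. measure_pmf.expectation q (f i)) = (\<Prod>i\<in>{j,k}. measure_pmf.expectation q (f i))"
    by (rule prod.mono_neutral_right) (use jk f1 in auto)
  moreover have "(\<Prod>i\<in>{j,k}. measure_pmf.expectation q (f i)) = (measure_pmf.expectation q g)^2"
  proof -
    have "f j = g" "f k = g" by (auto simp: f_def fun_eq_iff)
    thus ?thesis using jk by (simp add: power2_eq_square)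
  qed
  ultimately show ?thesis by simp
qed

lemma expectation_offspring_exp_sum:
  fixes g :: "nat \<Rightarrow> real"
  assumes g0: "\<And>v. 0 \<le> g v" and l: "l \<ge> 0"
  shows "measure_pmf.expectation (offspring N q) (\<lambda>x. exp (- l * (\<Sum>k<N. g (x k))))
       = (measure_pmf.expectation q (\<lambda>v. exp (- l * g v)))^N"
proof -
  have int: "integrable (measure_pmf q) (\<lambda>v. exp (- l * g v))"
    by (rule integrable_measure_pmf_bounded[where B=1])
       (use g0 l in \<open>auto simp: mult_nonneg_nonneg\<close>)
  have "(\<lambda>x. exp (- l * (\<Sum>k<N. g (x k)))) = (\<lambda>x. \<Prod>k\<in>{..<N}. exp (- l * g (x k)))"
    by (simp add: fun_eq_iff exp_sum sum_distrib_left flip: sum_negf)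
  moreover have "measure_pmf.expectation (offspring N q) (\<lambda>x. \<Prod>k\<in>{..<N}. exp (- l * g (x k)))
      = (\<Prod>k\<in>{..<N}. measure_pmf.expectation q (\<lambda>v. exp (- l * g v)))"
    unfolding offspring_def by (rule expectation_prod_Pi_pmf) (use int in auto)
  ultimately show ?thesis by simp
qed

lemma expectation_pair_pmf_mult:
  fixes \<phi> \<psi> :: "_ \<Rightarrow> real"
  assumes "\<And>v. 0 \<le> \<phi> v" "\<And>v. \<phi> v \<le> B" "\<And>v. 0 \<le> \<psi> v" "\<And>v. \<psi> v \<le> B'"
  shows "measure_pmf.expectation (pair_pmf p r) (\<lambda>z. \<phi> (fst z) * \<psi> (snd z))
       = measure_pmf.expectation p \<phi> * measure_pmf.expectation r \<psi>"
proof -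
  have "measure_pmf.expectation (pair_pmf p r) (\<lambda>z. \<phi> (fst z) * \<psi> (snd z))
      = measure_pmf.expectation p (\<lambda>a. measure_pmf.expectation (map_pmf (Pair a) r) (\<lambda>z. \<phi> (fst z) * \<psi> (snd z)))"
    unfolding pair_pmf_def map_pmf_def[symmetric]
    by (rule expectation_bind_pmf[where B="B * B'"])
       (use assms in \<open>auto intro!: mult_mono order_trans[OF assms(1) assms(2)]\<close>)
  also have "\<dots> = measure_pmf.expectation p (\<lambda>a. \<phi> a * measure_pmf.expectation r \<psi>)"
    by simp
  also have "\<dots> = measure_pmf.expectation p \<phi> * measure_pmf.expectation r \<psi>"
    by simp
  finally show ?thesis .
qed

lemma expectation_offspring_split_first:
  fixes \<phi> \<psi> :: "_ \<Rightarrow> real"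
  assumes N: "N \<ge> 1"
    and b: "\<And>v. 0 \<le> \<phi> v" "\<And>v. \<phi> v \<le> B" "\<And>v. 0 \<le> \<psi> v" "\<And>v. \<psi> v \<le> B'"
    and dep: "\<And>x y. (\<And>k. k \<noteq> 0 \<Longrightarrow> x k = y k) \<Longrightarrow> \<psi> x = \<psi> y"
  shows "measure_pmf.expectation (offspring N q) (\<lambda>x. \<phi> (x 0) * \<psi> x)
       = measure_pmf.expectation q \<phi> * measure_pmf.expectation (offspring N q) \<psi>"
proof -
  define R where "R = Pi_pmf {1..<N} 0 (\<lambda>_. q)"
  have ins: "{..<N} = insert 0 {1..<N}" using N by auto
  have off: "offspring N q = map_pmf (\<lambda>(y,f). f(0:=y)) (pair_pmf q R)"
    unfolding offspring_def R_def ins by (rule Pi_pmf_insert) auto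
  have d: "\<psi> (f(0:=y)) = \<psi> f" for f y by (rule dep) auto
  have "measure_pmf.expectation (offspring N q) (\<lambda>x. \<phi> (x 0) * \<psi> x)
      = measure_pmf.expectation (pair_pmf q R) (\<lambda>z. \<phi> (fst z) * \<psi> (snd z))"
    unfolding off by (simp add: case_prod_unfold d)
  also have "\<dots> = measure_pmf.expectation q \<phi> * measure_pmf.expectation R \<psi>"
    by (rule expectation_pair_pmf_mult) (use b in auto)
  also have "measure_pmf.expectation R \<psi> = measure_pmf.expectation (offspring N q) \<psi>"
    unfolding off by (simp add: case_prod_unfold d)
  finally show ?thesis .
qed

lemma expectation_offspring_sum:
  fixes g :: "nat \<Rightarrow> real"
  assumes gb: "\<And>v. \<bar>g v\<bar> \<le> B"
  shows "measure_pmf.expectation (offspring N q) (\<lambda>x. \<Sum>k<N. g (x k)) = real N * measure_pmf.expectation q g"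
proof -
  have "measure_pmf.expectation (offspring N q) (\<lambda>x. \<Sum>k<N. g (x k)) = (\<Sum>k<N. measure_pmf.expectation (offspring N q) (\<lambda>x. g (x k)))"
    by (rule Bochner_Integration.integral_sum[where f="\<lambda>k x. g (x k)"])
       (rule integrable_measure_pmf_bounded[where B=B], use gb in auto)
  also have "\<dots> = (\<Sum>k<N. measure_pmf.expectation q g)"
    by (intro sum.cong refl expectation_offspring_component) auto
  finally show ?thesis by simp
qed

lemma sum_sum_if_eq:
  fixes A B :: real
  shows "(\<Sum>j<N. \<Sum>k<N. if j = k then A else B) = real N * A + real N * (real N - 1) * B"
proof -
  have "(\<Sum>k<N. if j = k then A else B) = real N * B + (A - B)" if "j < N" for j
  proof -
    have "(\<Sum>k<N. if j = k then A else B) = (\<Sum>k<N. B + (if j = k then A - B else 0))"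
      by (intro sum.cong) auto
    also have "\<dots> = real N * B + (A - B)" using that by (simp add: sum.distrib)
    finally show ?thesis .
  qed
  hence "(\<Sum>j<N. \<Sum>k<N. if j = k then A else B) = (\<Sum>j<N. real N * B + (A - B))" by (intro sum.cong) auto
  also have "\<dots> = real N * A + real N * (real N - 1) * B" by (simp add: algebra_simps)
  finally show ?thesis .
qed

lemma expectation_offspring_sum_square:
  fixes g :: "nat \<Rightarrow> real"
  assumes g0: "\<And>v. 0 \<le> g v" and gB: "\<And>v. g v \<le> B"
  shows "measure_pmf.expectation (offspring N q) (\<lambda>x. (\<Sum>k<N. g (x k))^2)
     = real N * measure_pmf.expectation q (\<lambda>v. (g v)^2) + real N * (real N - 1) * (measure_pmf.expectation q g)^2"
proof -
  have gb: "\<bar>g v\<bar> \<le> B" for v using g0 gB by (metis abs_of_nonneg)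
  have B0: "0 \<le> B" using g0[of 0] gB[of 0] by linarith
  have square: "(\<lambda>x. (\<Sum>k<N. g (x k))^2) = (\<lambda>x. \<Sum>j<N. \<Sum>k<N. g (x j) * g (x k))"
    by (simp add: fun_eq_iff power2_eq_square sum_product)
  have "measure_pmf.expectation (offspring N q) (\<lambda>x. (\<Sum>k<N. g (x k))^2)
      = (\<Sum>j<N. \<Sum>k<N. measure_pmf.expectation (offspring N q) (\<lambda>x. g (x j) * g (x k)))"
  proof -
    have ib: "integrable (measure_pmf (offspring N q)) (\<lambda>x. g (x j) * g (x k))" for j k
      by (rule integrable_measure_pmf_bounded[where B="B*B"]) (auto simp: abs_mult intro!: mult_mono gb B0)
    have "measure_pmf.expectation (offspring N q) (\<lambda>x. \<Sum>j<N. \<Sum>k<N. g (x j) * g (x k))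
        = (\<Sum>j<N. measure_pmf.expectation (offspring N q) (\<lambda>x. \<Sum>k<N. g (x j) * g (x k)))"
      by (rule Bochner_Integration.integral_sum[where f="\<lambda>j x. \<Sum>k<N. g (x j) * g (x k)"])
         (auto intro!: Bochner_Integration.integrable_sum ib)
    also have "\<dots> = (\<Sum>j<N. \<Sum>k<N. measure_pmf.expectation (offspring N q) (\<lambda>x. g (x j) * g (x k)))"
      by (intro sum.cong refl Bochner_Integration.integral_sum[where f="\<lambda>k x. g (x j) * g (x k)" for j] ib)
    finally show ?thesis unfolding square .
  qed
  also have "\<dots> = (\<Sum>j<N. \<Sum>k<N. if j = k then measure_pmf.expectation q (\<lambda>v. (g v)^2) else (measure_pmf.expectation q g)^2)"
  proof (intro sum.cong refl)
    fix j k assume "j \<in> {..<N}" "k \<in> {..<N}"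
    thus "measure_pmf.expectation (offspring N q) (\<lambda>x. g (x j) * g (x k)) =
        (if j = k then measure_pmf.expectation q (\<lambda>v. (g v)^2) else (measure_pmf.expectation q g)^2)"
      using expectation_offspring_component[where k=j and g="\<lambda>v. (g v)^2"]
        expectation_offspring_pair[where j=j and k=k and g=g and B=B] g0 gB
      by (auto simp: power2_eq_square)
  qed
  also have "\<dots> = real N * measure_pmf.expectation q (\<lambda>v. (g v)^2) + real N * (real N - 1) * (measure_pmf.expectation q g)^2"
    by (rule sum_sum_if_eq)
  finally show ?thesis .
qed

lemma prob_offspring_sum_deviation:
  fixes g :: "nat \<Rightarrow> real"
  assumes g0: "\<And>v. 0 \<le> g v" and gB: "\<And>v. g v \<le> B" and t: "t > 0"
  shows "measure_pmf.prob (offspring N q)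
           {x. t \<le> \<bar>(\<Sum>k<N. g (x k)) - real N * measure_pmf.expectation q g\<bar>}
     \<le> real N * measure_pmf.expectation q (\<lambda>v. (g v)^2) / t^2"
proof -
  define S where "S x = (\<Sum>k<N. g (x k))" for x :: "nat \<Rightarrow> nat"
  have gb: "\<bar>g v\<bar> \<le> B" for v using g0 gB by (metis abs_of_nonneg)
  have Sb: "\<bar>S x\<bar> \<le> real N * B" for x
  proof -
    have "\<bar>S x\<bar> \<le> (\<Sum>k<N. \<bar>g (x k)\<bar>)" unfolding S_def by (rule sum_abs)
    also have "\<dots> \<le> (\<Sum>k<N. B)" by (intro sum_mono gb)
    finally show ?thesis by simp
  qed
  have S2b: "(S x)^2 \<le> (real N * B)^2" for x
    using power_mono[OF Sb[of x] abs_ge_zero, of 2] by simp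
  have int: "integrable (measure_pmf (offspring N q)) S"
    "integrable (measure_pmf (offspring N q)) (\<lambda>x. (S x)^2)"
    using Sb S2b by (auto intro: integrable_measure_pmf_bounded[where B="real N * B"]
      integrable_measure_pmf_bounded[where B="(real N * B)^2"])
  have ES: "measure_pmf.expectation (offspring N q) S = real N * measure_pmf.expectation q g"
    unfolding S_def by (rule expectation_offspring_sum[OF gb])
  have "measure_pmf.variance (offspring N q) S
      = measure_pmf.expectation (offspring N q) (\<lambda>x. (S x)^2) - (measure_pmf.expectation (offspring N q) S)^2"
    by (rule measure_pmf.variance_eq[OF int])
  also have "\<dots> = real N * measure_pmf.expectation q (\<lambda>v. (g v)^2) - real N * (measure_pmf.expectation q g)^2"
    using expectation_offspring_sum_square[OF g0 gB, of N q] unfolding ES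
    by (simp add: S_def power2_eq_square algebra_simps)
  finally have var: "measure_pmf.variance (offspring N q) S \<le> real N * measure_pmf.expectation q (\<lambda>v. (g v)^2)"
    by simp
  have "measure_pmf.prob (offspring N q) {x. t \<le> \<bar>S x - measure_pmf.expectation (offspring N q) S\<bar>}
      \<le> measure_pmf.variance (offspring N q) S / t^2"
    using measure_pmf.Chebyshev_inequality[where f=S and a=t and M="offspring N q"] int t by simp
  also have "\<dots> \<le> real N * measure_pmf.expectation q (\<lambda>v. (g v)^2) / t^2"
    using var by (intro divide_right_mono) auto
  finally show ?thesis unfolding ES S_def .
qed

lemma prob_le_expectation:
  fixes g :: "'a \<Rightarrow> real"
  assumes g0: "\<And>x. x \<in> set_pmf p \<Longrightarrow> 0 \<le> g x" and g1: "\<And>x. x \<in> set_pmf p \<Longrightarrow> P x \<Longrightarrow> 1 \<le> g x"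
    and int: "integrable (measure_pmf p) g"
  shows "measure_pmf.prob p {x. P x} \<le> measure_pmf.expectation p g"
proof -
  have "measure_pmf.prob p {x. P x} = measure_pmf.expectation p (indicator {x. P x})" by simp
  also have "\<dots> \<le> measure_pmf.expectation p g"
    by (intro integral_mono_AE int integrable_measure_pmf_bounded[where B=1])
       (auto simp: AE_measure_pmf_iff indicator_def intro: g0 g1)
  finally show ?thesis .
qed

lemma exp_neg_le_quadratic:
  fixes u :: real
  assumes u: "0 \<le> u"
  shows "exp (-u) \<le> 1 - u + u^2/2"
proof -
  define h where "h t = 1 - t + t^2/2 - exp (-t)" for t :: real
  have "h 0 \<le> h u"
  proof (rule DERIV_nonneg_imp_increasing_open[OF u])
    fix x :: real assume x: "0 < x" "x < u"
    have "DERIV h x :> (-1 + x + exp (-x))" unfolding h_def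
      by (auto intro!: derivative_eq_intros simp: power2_eq_square algebra_simps)
    moreover have "exp (-x) \<ge> 1 - x" using exp_ge_add_one_self[of "-x"] by simp
    ultimately show "\<exists>y. DERIV h x :> y \<and> 0 \<le> y" by (intro exI[of _ "-1 + x + exp (-x)"]) auto
  next
    show "continuous_on {0..u} h" unfolding h_def by (intro continuous_intros) auto
  qed
  thus ?thesis by (simp add: h_def)
qed

lemma expectation_exp_neg_le:
  fixes g :: "'a \<Rightarrow> real"
  assumes g0: "\<And>v. 0 \<le> g v" and gB: "\<And>v. g v \<le> B" and l: "l \<ge> 0"
  shows "measure_pmf.expectation p (\<lambda>v. exp (- l * g v))
    \<le> exp (- l * measure_pmf.expectation p g + l^2 * measure_pmf.expectation p (\<lambda>v. (g v)^2) / 2)"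
proof -
  have gb: "\<bar>g v\<bar> \<le> B" for v using g0 gB by (metis abs_of_nonneg)
  have ig: "integrable (measure_pmf p) g" "integrable (measure_pmf p) (\<lambda>v. (g v)^2)"
    using gb power_mono[OF gb abs_ge_zero, where n=2]
    by (auto intro: integrable_measure_pmf_bounded[where B=B] integrable_measure_pmf_bounded[where B="B^2"])
  have "measure_pmf.expectation p (\<lambda>v. exp (- l * g v))
      \<le> measure_pmf.expectation p (\<lambda>v. 1 + (- l * g v + l^2 / 2 * (g v)^2))"
  proof (intro integral_mono)
    show "integrable (measure_pmf p) (\<lambda>v. exp (- l * g v))"
      by (rule integrable_measure_pmf_bounded[where B=1]) (use g0 l in auto)
    show "integrable (measure_pmf p) (\<lambda>v. 1 + (- l * g v + l^2 / 2 * (g v)^2))"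
      using ig by (intro Bochner_Integration.integrable_add integrable_mult_right measure_pmf.integrable_const)
    show "exp (- l * g v) \<le> 1 + (- l * g v + l^2 / 2 * (g v)^2)" for v
      using exp_neg_le_quadratic[of "l * g v"] g0[of v] l by (simp add: power_mult_distrib)
  qed
  also have "\<dots> = 1 + (- l * measure_pmf.expectation p g + l^2 * measure_pmf.expectation p (\<lambda>v. (g v)^2) / 2)"
    using ig by simp
  also have "\<dots> \<le> exp (- l * measure_pmf.expectation p g + l^2 * measure_pmf.expectation p (\<lambda>v. (g v)^2) / 2)"
    by (rule exp_ge_add_one_self)
  finally show ?thesis .
qed

lemma prob_offspring_sum_less:
  fixes g :: "nat \<Rightarrow> real"
  assumes g0: "\<And>v. 0 \<le> g v" and gB: "\<And>v. g v \<le> B" and l: "l \<ge> 0"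
  shows "measure_pmf.prob (offspring N q) {x. (\<Sum>k<N. g (x k)) < b}
     \<le> exp (l * b - l * real N * measure_pmf.expectation q g
            + l^2 * real N * measure_pmf.expectation q (\<lambda>v. (g v)^2) / 2)"
proof -
  define S where "S x = (\<Sum>k<N. g (x k))" for x :: "nat \<Rightarrow> nat"
  define e where "e = - l * measure_pmf.expectation q g + l^2 * measure_pmf.expectation q (\<lambda>v. (g v)^2) / 2"
  have S0: "0 \<le> S x" for x unfolding S_def by (intro sum_nonneg g0)
  have "measure_pmf.prob (offspring N q) {x. S x < b}
      \<le> measure_pmf.expectation (offspring N q) (\<lambda>x. exp (l * b) * exp (- l * S x))"
  proof (rule prob_le_expectation)
    fix x assume "S x < b"
    hence "0 \<le> l * b + - l * S x" using mult_left_mono[of "S x" b l] l by simp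
    thus "1 \<le> exp (l * b) * exp (- l * S x)" by (simp add: mult_exp_exp del: mult_minus_left)
  next
    show "integrable (measure_pmf (offspring N q)) (\<lambda>x. exp (l * b) * exp (- l * S x))"
      by (rule integrable_measure_pmf_bounded[where B="exp (l * b)"]) (use S0 l in auto)
  qed simp
  also have "\<dots> = exp (l * b) * (measure_pmf.expectation q (\<lambda>v. exp (- l * g v)))^N"
    unfolding S_def using expectation_offspring_exp_sum[OF g0 l, of N q] by simp
  also have "\<dots> \<le> exp (l * b) * (exp e)^N"
    unfolding e_def using expectation_exp_neg_le[OF g0 gB l, of q]
    by (intro mult_left_mono power_mono integral_nonneg_AE) auto
  also have "\<dots> = exp (l * b + real N * e)"
    by (simp add: exp_add exp_of_nat_mult)
  finally show ?thesis unfolding S_def e_def by (simp add: algebra_simps)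
qed

lemma prob_le_add_of_cover:
  assumes "\<And>x. x \<in> set_pmf p \<Longrightarrow> x \<in> A \<Longrightarrow> x \<in> B \<or> x \<in> C"
  shows "measure_pmf.prob p A \<le> measure_pmf.prob p B + measure_pmf.prob p C"
proof -
  have "measure_pmf.prob p A = measure_pmf.prob p (A \<inter> set_pmf p)" by (simp add: measure_Int_set_pmf)
  also have "\<dots> \<le> measure_pmf.prob p (B \<union> C)"
    by (rule measure_pmf.finite_measure_mono) (use assms in auto)
  also have "\<dots> \<le> measure_pmf.prob p B + measure_pmf.prob p C"
    by (rule measure_Un_le) auto
  finally show ?thesis .
qed

section \<open>The median of the total offspring and truncated excesses\<close>

definition med :: "nat \<Rightarrow> nat pmf \<Rightarrow> nat" where
  "med N q = (LEAST n. 1/2 \<le> measure_pmf.prob (offspring N q) {x. S_tot N x \<le> n})"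

lemma prob_S_tot_le_med: "1/2 \<le> measure_pmf.prob (offspring N q) {x. S_tot N x \<le> med N q}"
proof -
  let ?A = "\<lambda>n. {x. S_tot N x \<le> n}"
  have "(\<lambda>n. measure_pmf.prob (offspring N q) (?A n))
      \<longlonglongrightarrow> measure_pmf.prob (offspring N q) (\<Union>n. ?A n)"
    by (rule measure_pmf.finite_Lim_measure_incseq) (auto simp: incseq_def)
  moreover have "(\<Union>n. ?A n) = UNIV" by auto
  ultimately have "(\<lambda>n. measure_pmf.prob (offspring N q) (?A n)) \<longlonglongrightarrow> 1" by simp
  hence "\<exists>n. 1/2 \<le> measure_pmf.prob (offspring N q) (?A n)"
    by (metis (lifting) order_tendstoD(1) eventually_sequentially less_eq_real_def
        field_sum_of_halves less_add_same_cancel2 order_refl zero_less_divide_1_iff zero_less_numeral)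
  thus ?thesis unfolding med_def by (rule LeastI_ex)
qed

lemma prob_med_le_S_tot: "1/2 \<le> measure_pmf.prob (offspring N q) {x. med N q \<le> S_tot N x}"
proof (cases "med N q = 0")
  case False
  hence "\<not> 1/2 \<le> measure_pmf.prob (offspring N q) {x. S_tot N x \<le> med N q - 1}"
    unfolding med_def by (intro not_less_Least) (auto simp: med_def)
  moreover have "{x. med N q \<le> S_tot N x} = UNIV - {x. S_tot N x \<le> med N q - 1}"
    using False by auto
  ultimately show ?thesis
    using measure_pmf.prob_compl[where M="offspring N q" and A="{x. S_tot N x \<le> med N q - 1}"]
    by simp
qed simp

lemma med_ge_N:
  assumes q: "set_pmf q \<subseteq> {1..}"
  shows "N \<le> med N q"
proof (rule ccontr)
  assume "\<not> N \<le> med N q"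
  hence "med N q < S_tot N x" if "x \<in> set_pmf (offspring N q)" for x
    using S_tot_ge[of N x] offspring_ge_1[OF that q] by fastforce
  hence "{x. S_tot N x \<le> med N q} \<inter> set_pmf (offspring N q) = {}"
    by force
  hence "measure_pmf.prob (offspring N q) {x. S_tot N x \<le> med N q} = 0"
    by (simp add: measure_pmf_zero_iff Int_commute)
  with prob_S_tot_le_med[of N q] show False by simp
qed

definition clip :: "real \<Rightarrow> nat \<Rightarrow> real" where
  "clip t v = max 0 (min (real v - 1) t)"

lemma clip_nonneg: "0 \<le> clip t v"
  by (simp add: clip_def)

lemma clip_le: "0 \<le> t \<Longrightarrow> clip t v \<le> t"
  by (simp add: clip_def)

lemma clip_le_pred: "1 \<le> v \<Longrightarrow> clip t v \<le> real v - 1"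
  by (simp add: clip_def)

lemma clip_mono: "t \<le> t' \<Longrightarrow> clip t v \<le> clip t' v"
  by (simp add: clip_def)

lemma clip_sq_le: "0 \<le> t \<Longrightarrow> (clip t v)^2 \<le> t^2"
  by (intro power_mono clip_le clip_nonneg)

lemma clip_minus_le_clip_eighth:
  assumes m: "m > 0"
  shows "clip m v - 8 * (clip m v)^2 / m \<le> clip (m/8) v"
proof (cases "real v - 1 \<le> m/8")
  case True
  hence "clip (m/8) v = clip m v" using m by (simp add: clip_def)
  thus ?thesis using m by simp
next
  case False
  hence "clip (m/8) v = m/8" and c: "8 * clip m v / m > 1" using m by (auto simp: clip_def field_simps min_def)
  have "clip m v * 1 \<le> clip m v * (8 * clip m v / m)"
    using c by (intro mult_left_mono) (auto simp: clip_nonneg)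
  also have "\<dots> = 8 * (clip m v)^2 / m" by (simp add: power2_eq_square)
  finally show ?thesis using \<open>clip (m/8) v = m/8\<close> m by simp
qed

lemma sq_div_le_ff2_div_ff2:
  fixes a t :: nat and u m :: real
  assumes a: "1 \<le> a" "2 \<le> a + t" and m: "real t \<le> m" "1 \<le> m"
    and u: "0 \<le> u" "u \<le> real a - 1" "u \<le> m"
  shows "u^2 / (9 * m^2) \<le> ff2 a / ff2 (a + t)"
proof -
  define A T where "A = real a" and "T = real t"
  have AT: "1 \<le> A" "0 \<le> T" "2 \<le> A + T" "T \<le> m" "u \<le> A - 1"
    using a m u by (auto simp: A_def T_def)
  have "u * (A + T) = u * (A - 1) + u * (1 + T)" by algebra
  also have "\<dots> \<le> m * (A - 1) + (A - 1) * (2 * m)"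
    using AT m u by (intro add_mono mult_mono) auto
  finally have "u / (3 * m) \<le> (A - 1) / (A + T)"
    using AT m by (simp add: field_simps)
  hence "(u / (3 * m))^2 \<le> ((A - 1) / (A + T))^2"
    using u m by (intro power_mono) auto
  hence "u^2 / (9 * m^2) \<le> (A - 1)^2 / (A + T)^2"
    by (simp add: power_divide power_mult_distrib)
  also have "\<dots> \<le> A * (A - 1) / ((A + T) * (A + T - 1))"
  proof -
    have "(A - 1) * (A + T - 1) \<le> A * (A + T)"
      using mult_right_mono[of 1 A "A + T"] AT by (simp add: algebra_simps)
    hence "(A - 1) * (A + T - 1) * ((A - 1) * (A + T)) \<le> A * (A + T) * ((A - 1) * (A + T))"
      using AT by (intro mult_right_mono) auto
    hence "(A - 1)^2 * ((A + T) * (A + T - 1)) \<le> A * (A - 1) * (A + T)^2"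
      by (simp add: power2_eq_square algebra_simps)
    moreover have "(A + T)^2 > 0" "(A + T) * (A + T - 1) > 0" using AT by auto
    ultimately show ?thesis by (simp add: divide_simps)
  qed
  finally show ?thesis by (simp add: ff2_def A_def T_def)
qed

lemma exp_neg_inverse_div_le:
  fixes K y :: real
  assumes K: "K > 0" and y: "y > 0"
  shows "exp (- 1 / (K * y)) / y \<le> 4 * K^2 * y"
proof -
  define t where "t = 1 / (K * y)"
  have t: "t > 0" using K y by (simp add: t_def)
  have "(t/2)^2 \<le> (exp (t/2))^2"
    using exp_ge_add_one_self[of "t/2"] t by (intro power_mono) linarith+
  also have "(exp (t/2))^2 = exp t" by (simp add: power2_eq_square flip: exp_add)
  finally have "exp (- t) \<le> 4 / t^2" using t by (simp add: exp_minus field_simps)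
  also have "4 / t^2 = 4 * K^2 * y^2" using K y by (simp add: t_def power_divide field_simps)
  finally have "exp (- t) / y \<le> 4 * K^2 * y^2 / y" using y by (intro divide_right_mono) auto
  thus ?thesis using y by (simp add: t_def power2_eq_square)
qed

section \<open>Estimates for a fixed population size\<close>

locale cannings_law =
  fixes N :: nat and q :: "nat pmf"
  assumes two_le_N: "2 \<le> N" and offspring_pos: "set_pmf q \<subseteq> {1..}"
begin

abbreviation m :: real where "m \<equiv> real (med N q)"

lemma N_le_m: "real N \<le> m"
  using med_ge_N[OF offspring_pos] by simp

lemma m_pos: "0 < m"
  using N_le_m two_le_N by linarith

lemma prob_rest_le_med: "1/2 \<le> measure_pmf.prob (offspring N q) {x. (\<Sum>k\<in>{1..<N}. x k) \<le> med N q}"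
proof -
  have "{x. S_tot N x \<le> med N q} \<subseteq> {x. (\<Sum>k\<in>{1..<N}. x k) \<le> med N q}"
    using two_le_N by (auto simp: S_tot_eq_first_plus_rest)
  hence "measure_pmf.prob (offspring N q) {x. S_tot N x \<le> med N q}
      \<le> measure_pmf.prob (offspring N q) {x. (\<Sum>k\<in>{1..<N}. x k) \<le> med N q}"
    by (intro measure_pmf.finite_measure_mono) auto
  with prob_S_tot_le_med[of N q] show ?thesis by linarith
qed

lemma second_moment_clip_le: "real N * measure_pmf.expectation q (\<lambda>v. (clip m v)^2) \<le> 18 * cN N q * m^2"
proof -
  define R where "R = {x :: nat \<Rightarrow> nat. (\<Sum>k\<in>{1..<N}. x k) \<le> med N q}"
  define h where "h x = ff2 (x 0) / ff2 (S_tot N x)" for x :: "nat \<Rightarrow> nat"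
  have S: "S_tot N x = x 0 + (\<Sum>k\<in>{1..<N}. x k)" for x
    using two_le_N by (simp add: S_tot_eq_first_plus_rest)
  have h: "0 \<le> h x \<and> h x \<le> 1" for x
    using ff2_mono[of "x 0" "S_tot N x"] ff2_nonneg[of "x 0"] ff2_nonneg[of "S_tot N x"]
    by (auto simp: h_def S divide_le_eq_1)
  have pointwise: "(clip m (x 0))^2 * indicator R x \<le> 9 * m^2 * h x"
    if x: "x \<in> set_pmf (offspring N q)" for x
  proof (cases "x \<in> R")
    case True
    have "1 \<le> x 0" "N \<le> S_tot N x"
      using x two_le_N offspring_ge_1[OF x offspring_pos] S_tot_ge[of N x] by auto
    moreover have "(\<Sum>k\<in>{1..<N}. real (x k)) \<le> m"
      using True of_nat_mono[of "sum x {1..<N}" "med N q", where 'a=real] by (simp add: R_def)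
    ultimately have "(clip m (x 0))^2 / (9 * m^2) \<le> h x"
      unfolding h_def S using True N_le_m two_le_N m_pos
      by (intro sq_div_le_ff2_div_ff2) (auto simp: R_def clip_nonneg clip_le clip_le_pred)
    thus ?thesis using True m_pos by (simp add: field_simps)
  qed (use h m_pos in simp)
  have "measure_pmf.expectation q (\<lambda>v. (clip m v)^2) / 2
      \<le> measure_pmf.expectation q (\<lambda>v. (clip m v)^2) * measure_pmf.prob (offspring N q) R"
    using mult_left_mono[OF prob_rest_le_med, of "measure_pmf.expectation q (\<lambda>v. (clip m v)^2)"]
    by (simp add: R_def Bochner_Integration.integral_nonneg)
  also have "\<dots> = measure_pmf.expectation (offspring N q) (\<lambda>x. (clip m (x 0))^2 * indicator R x)"
    \<comment> \<open>R does not depend on the offspring number of individual 0\<close>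
    by (subst expectation_offspring_split_first[where B="m^2" and B'=1])
       (use two_le_N m_pos in \<open>auto simp: R_def clip_sq_le indicator_def\<close>)
  also have "\<dots> \<le> measure_pmf.expectation (offspring N q) (\<lambda>x. 9 * m^2 * h x)"
  proof (intro integral_mono_AE)
    show "integrable (offspring N q) (\<lambda>x. (clip m (x 0))^2 * indicator R x)"
      by (rule integrable_measure_pmf_bounded[where B="m^2"])
         (use clip_sq_le[of m] m_pos in \<open>auto simp: indicator_def\<close>)
    show "integrable (offspring N q) (\<lambda>x. 9 * m^2 * h x)"
      by (rule integrable_measure_pmf_bounded[where B="9 * m^2"])
         (use h in \<open>auto simp: abs_mult intro: mult_left_le\<close>)
  qed (simp add: AE_measure_pmf_iff pointwise)
  also have "\<dots> = 9 * m^2 * cN N q / real N"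
    unfolding integral_mult_right_zero h_def cN_eq_expectation_offspring[OF two_le_N offspring_pos]
    using two_le_N by simp
  finally show ?thesis using two_le_N by (simp add: field_simps)
qed

abbreviation mean_clip :: real where "mean_clip \<equiv> real N * measure_pmf.expectation q (clip m)"

lemma prob_large_offspring:
  "measure_pmf.prob (offspring N q) {x. \<exists>k<N. real (x k) - 1 > m} \<le> 18 * cN N q"
proof -
  have "measure_pmf.prob (offspring N q) {x. \<exists>k<N. real (x k) - 1 > m}
     \<le> measure_pmf.expectation (offspring N q) (\<lambda>x. \<Sum>k<N. (clip m (x k))^2 / m^2)"
  proof (rule prob_le_expectation)
    fix x assume "\<exists>k<N. real (x k) - 1 > m"
    then obtain k where k: "k < N" "real (x k) - 1 > m" by auto
    have "1 = (clip m (x k))^2 / m^2" using k m_pos by (simp add: clip_def)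
    also have "\<dots> \<le> (\<Sum>k<N. (clip m (x k))^2 / m^2)"
      using k by (intro member_le_sum) auto
    finally show "1 \<le> (\<Sum>k<N. (clip m (x k))^2 / m^2)" .
  next
    show "integrable (measure_pmf (offspring N q)) (\<lambda>x. \<Sum>k<N. (clip m (x k))^2 / m^2)"
      by (intro Bochner_Integration.integrable_sum integrable_measure_pmf_bounded[where B=1])
         (use clip_sq_le m_pos in \<open>auto simp: divide_le_eq\<close>)
  qed (auto intro!: sum_nonneg)
  also have "\<dots> = real N * measure_pmf.expectation q (\<lambda>v. (clip m v)^2 / m^2)"
    by (rule expectation_offspring_sum[where B=1])
       (use clip_sq_le m_pos in \<open>auto simp: divide_le_eq\<close>)
  also have "\<dots> = real N * (measure_pmf.expectation q (\<lambda>v. (clip m v)^2) / m^2)" by simp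
  also have "\<dots> \<le> 18 * cN N q" using second_moment_clip_le m_pos by (simp add: field_simps)
  finally show ?thesis .
qed

lemma prob_clip_sum_deviation:
  assumes e: "e > 0"
  shows "measure_pmf.prob (offspring N q) {x. e * m \<le> \<bar>(\<Sum>k<N. clip m (x k)) - mean_clip\<bar>} \<le> 18 * cN N q / e^2"
proof -
  have "measure_pmf.prob (offspring N q) {x. e * m \<le> \<bar>(\<Sum>k<N. clip m (x k)) - mean_clip\<bar>}
      \<le> real N * measure_pmf.expectation q (\<lambda>v. (clip m v)^2) / (e * m)^2"
    by (rule prob_offspring_sum_deviation[where B=m])
       (use e m_pos in \<open>auto intro: clip_nonneg clip_le\<close>)
  also have "\<dots> \<le> 18 * cN N q * m^2 / (e * m)^2"
    using second_moment_clip_le e m_pos by (intro divide_right_mono) auto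
  also have "\<dots> = 18 * cN N q / e^2" using m_pos by (simp add: power_mult_distrib)
  finally show ?thesis .
qed

lemma S_tot_eq_N_plus_clip_sum:
  assumes x: "x \<in> set_pmf (offspring N q)" and small: "\<forall>k<N. real (x k) - 1 \<le> m"
  shows "real (S_tot N x) = real N + (\<Sum>k<N. clip m (x k))"
proof -
  have "real (x k) = 1 + clip m (x k)" if "k < N" for k
    using offspring_ge_1[OF x offspring_pos that] small that by (auto simp: clip_def)
  hence "real (S_tot N x) = (\<Sum>k<N. 1 + clip m (x k))" by (simp add: S_tot_def)
  thus ?thesis by (simp add: sum.distrib)
qed

lemma prob_S_tot_far_from_N_plus_mean_clip:
  assumes e: "e > 0"
  shows "measure_pmf.prob (offspring N q) {x. e * m \<le> \<bar>real (S_tot N x) - (real N + mean_clip)\<bar>}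
    \<le> 18 * cN N q + 18 * cN N q / e^2"
proof -
  have "measure_pmf.prob (offspring N q) {x. e * m \<le> \<bar>real (S_tot N x) - (real N + mean_clip)\<bar>}
      \<le> measure_pmf.prob (offspring N q) {x. \<exists>k<N. real (x k) - 1 > m}
       + measure_pmf.prob (offspring N q) {x. e * m \<le> \<bar>(\<Sum>k<N. clip m (x k)) - mean_clip\<bar>}"
  proof (rule prob_le_add_of_cover)
    fix x assume x: "x \<in> set_pmf (offspring N q)"
      and far: "x \<in> {x. e * m \<le> \<bar>real (S_tot N x) - (real N + mean_clip)\<bar>}"
    show "x \<in> {x. \<exists>k<N. real (x k) - 1 > m}
        \<or> x \<in> {x. e * m \<le> \<bar>(\<Sum>k<N. clip m (x k)) - mean_clip\<bar>}"
    proof (cases "\<forall>k<N. real (x k) - 1 \<le> m")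
      case True
      thus ?thesis using far S_tot_eq_N_plus_clip_sum[OF x True] by simp
    qed auto
  qed
  also have "\<dots> \<le> 18 * cN N q + 18 * cN N q / e^2"
    by (intro add_mono prob_large_offspring prob_clip_sum_deviation e)
  finally show ?thesis .
qed

text \<open>Each of the events S \<le> m and S \<ge> m has probability at least 1/2, while S is within
  e m of N + mean_clip except on an event of probability less than 1/2.\<close>
lemma med_near_N_plus_mean_clip:
  assumes e: "e > 0" and small: "18 * cN N q + 18 * cN N q / e^2 < 1/2"
  shows "\<bar>real N + mean_clip - m\<bar> \<le> e * m"
proof (rule ccontr)
  let ?far = "{x. e * m \<le> \<bar>real (S_tot N x) - (real N + mean_clip)\<bar>}"
  assume "\<not> ?thesis"
  then consider "e * m < real N + mean_clip - m" | "e * m < m - (real N + mean_clip)" by linarith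
  hence "1/2 \<le> measure_pmf.prob (offspring N q) ?far"
  proof cases
    case 1
    have "{x. S_tot N x \<le> med N q} \<subseteq> ?far"
    proof clarify
      fix x assume "S_tot N x \<le> med N q"
      hence "real (S_tot N x) \<le> m" by simp
      thus "e * m \<le> \<bar>real (S_tot N x) - (real N + mean_clip)\<bar>"
        using 1 abs_ge_minus_self[of "real (S_tot N x) - (real N + mean_clip)"] by linarith
    qed
    hence "measure_pmf.prob (offspring N q) {x. S_tot N x \<le> med N q} \<le> measure_pmf.prob (offspring N q) ?far"
      by (rule measure_pmf.finite_measure_mono) simp
    with prob_S_tot_le_med[of N q] show ?thesis by linarith
  next
    case 2
    have "{x. med N q \<le> S_tot N x} \<subseteq> ?far"
    proof clarify
      fix x assume "med N q \<le> S_tot N x"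
      hence "m \<le> real (S_tot N x)" by simp
      thus "e * m \<le> \<bar>real (S_tot N x) - (real N + mean_clip)\<bar>"
        using 2 abs_ge_self[of "real (S_tot N x) - (real N + mean_clip)"] by linarith
    qed
    hence "measure_pmf.prob (offspring N q) {x. med N q \<le> S_tot N x} \<le> measure_pmf.prob (offspring N q) ?far"
      by (rule measure_pmf.finite_measure_mono) simp
    with prob_med_le_S_tot[of N q] show ?thesis by linarith
  qed
  thus False using prob_S_tot_far_from_N_plus_mean_clip[OF e] small by linarith
qed

lemma prob_S_tot_div_m_far:
  assumes e: "e > 0" and small: "18 * cN N q + 18 * cN N q / e^2 < 1/2"
  shows "measure_pmf.prob (offspring N q) {x. 2 * e < \<bar>real (S_tot N x) / m - 1\<bar>}
    \<le> 18 * cN N q + 18 * cN N q / e^2"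
proof -
  have "{x. 2 * e < \<bar>real (S_tot N x) / m - 1\<bar>}
      \<subseteq> {x. e * m \<le> \<bar>real (S_tot N x) - (real N + mean_clip)\<bar>}"
  proof clarify
    fix x assume "2 * e < \<bar>real (S_tot N x) / m - 1\<bar>"
    moreover have "\<bar>real (S_tot N x) / m - 1\<bar> = \<bar>real (S_tot N x) - m\<bar> / m"
      using m_pos by (simp add: abs_div_pos diff_divide_distrib)
    ultimately have "2 * e * m < \<bar>real (S_tot N x) - m\<bar>"
      using m_pos by (simp add: less_divide_eq)
    thus "e * m \<le> \<bar>real (S_tot N x) - (real N + mean_clip)\<bar>"
      using med_near_N_plus_mean_clip[OF e small] by linarith
  qed
  hence "measure_pmf.prob (offspring N q) {x. 2 * e < \<bar>real (S_tot N x) / m - 1\<bar>}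
      \<le> measure_pmf.prob (offspring N q) {x. e * m \<le> \<bar>real (S_tot N x) - (real N + mean_clip)\<bar>}"
    by (intro measure_pmf.finite_measure_mono) auto
  with prob_S_tot_far_from_N_plus_mean_clip[OF e] show ?thesis by linarith
qed

lemma clip_eighth_sum_lt_of_max_dominates:
  assumes x: "x \<in> set_pmf (offspring N q)"
    and ev: "real (S_tot N x) - real (Max_off N x) < 1/8 * m"
  shows "(\<Sum>k<N. clip (m/8) (x k)) < m/4 - real N + 1"
proof -
  have "Max_off N x \<in> x ` {..<N}"
    unfolding Max_off_def using two_le_N by (intro Max_in) (auto simp: lessThan_empty_iff)
  then obtain j where j: "j < N" "Max_off N x = x j" by auto
  have "real (S_tot N x) = real (x j) + (\<Sum>k\<in>{..<N} - {j}. real (x k))"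
    unfolding S_tot_def using j by (simp add: sum.remove)
  moreover have "(\<Sum>k\<in>{..<N} - {j}. 1 + clip (m/8) (x k)) \<le> (\<Sum>k\<in>{..<N} - {j}. real (x k))"
  proof (intro sum_mono)
    fix k assume "k \<in> {..<N} - {j}"
    thus "1 + clip (m/8) (x k) \<le> real (x k)"
      using clip_le_pred[of "x k" "m/8"] offspring_ge_1[OF x offspring_pos, of k] by auto
  qed
  moreover have "(\<Sum>k\<in>{..<N} - {j}. 1 + clip (m/8) (x k))
      = (real N - 1) + (\<Sum>k\<in>{..<N} - {j}. clip (m/8) (x k))"
    using j by (simp add: sum.distrib of_nat_diff)
  moreover have "(\<Sum>k<N. clip (m/8) (x k)) = clip (m/8) (x j) + (\<Sum>k\<in>{..<N} - {j}. clip (m/8) (x k))"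
    using j by (simp add: sum.remove)
  moreover have "clip (m/8) (x j) \<le> m/8" using m_pos by (intro clip_le) auto
  ultimately show ?thesis using ev j by linarith
qed

lemma mean_clip_eighth_ge: "mean_clip - 144 * cN N q * m \<le> real N * measure_pmf.expectation q (clip (m/8))"
proof -
  have int: "integrable (measure_pmf q) (clip t)" "integrable (measure_pmf q) (\<lambda>v. (clip t v)^2)"
    if "0 \<le> t" for t
  proof -
    show "integrable (measure_pmf q) (clip t)"
      using clip_le[OF that] clip_nonneg[of t] by (intro integrable_measure_pmf_bounded[where B=t]) auto
    show "integrable (measure_pmf q) (\<lambda>v. (clip t v)^2)"
      using clip_sq_le[OF that] by (intro integrable_measure_pmf_bounded[where B="t^2"]) auto
  qed
  have "measure_pmf.expectation q (clip m) - 8 * measure_pmf.expectation q (\<lambda>v. (clip m v)^2) / m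
      = measure_pmf.expectation q (\<lambda>v. clip m v - 8 * (clip m v)^2 / m)"
    using int m_pos by simp
  also have "\<dots> \<le> measure_pmf.expectation q (clip (m/8))"
    using int m_pos by (intro integral_mono clip_minus_le_clip_eighth) auto
  finally have "real N * (measure_pmf.expectation q (clip m) - 8 * measure_pmf.expectation q (\<lambda>v. (clip m v)^2) / m)
      \<le> real N * measure_pmf.expectation q (clip (m/8))"
    by (intro mult_left_mono) auto
  hence "mean_clip - real N * (8 * measure_pmf.expectation q (\<lambda>v. (clip m v)^2) / m)
      \<le> real N * measure_pmf.expectation q (clip (m/8))"
    by (simp only: right_diff_distrib)
  moreover have "real N * (8 * measure_pmf.expectation q (\<lambda>v. (clip m v)^2) / m) \<le> 144 * cN N q * m"
    using second_moment_clip_le m_pos by (simp add: field_simps power2_eq_square)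
  ultimately show ?thesis by linarith
qed

lemma second_moment_clip_eighth_le:
  "real N * measure_pmf.expectation q (\<lambda>v. (clip (m/8) v)^2) \<le> 18 * cN N q * m^2"
proof -
  have "measure_pmf.expectation q (\<lambda>v. (clip (m/8) v)^2) \<le> measure_pmf.expectation q (\<lambda>v. (clip m v)^2)"
    using m_pos clip_sq_le[of m] clip_sq_le[of "m/8"]
    by (intro integral_mono power_mono clip_mono clip_nonneg integrable_measure_pmf_bounded) auto
  with second_moment_clip_le show ?thesis
    by (meson mult_left_mono of_nat_0_le_iff order_trans)
qed

text \<open>Chernoff bound for the excesses truncated at m/8; the tilt 1/(72 c m) optimises
  the exponent -l m/4 + 9 c m^2 l^2.\<close>
lemma prob_S_tot_minus_Max_small:
  assumes N: "4 \<le> N" and c: "0 < cN N q" "cN N q \<le> 1/2400"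
  shows "measure_pmf.prob (offspring N q) {x. real (S_tot N x) - real (Max_off N x) < 1/8 * m}
    \<le> exp (- 1 / (576 * cN N q))"
proof -
  define l where "l = 1 / (72 * cN N q * m)"
  define b where "b = m/4 - real N + 1"
  have l: "0 \<le> l" using c m_pos by (simp add: l_def)
  have "\<bar>real N + mean_clip - m\<bar> \<le> 1/8 * m"
    using c by (intro med_near_N_plus_mean_clip) (auto simp: power2_eq_square)
  hence "m - (real N + mean_clip) \<le> 1/8 * m" by (simp only: abs_le_iff) linarith
  moreover have "144 * cN N q * m \<le> m / 8"
    using c m_pos mult_right_mono[of "144 * cN N q" "1/8" m] by simp
  moreover have "(4::real) \<le> real N" using N by simp
  ultimately have "b - real N * measure_pmf.expectation q (clip (m/8)) \<le> - m / 4"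
    using mean_clip_eighth_ge N_le_m unfolding b_def by linarith
  hence "l * (b - real N * measure_pmf.expectation q (clip (m/8)))
      + l^2 * (real N * measure_pmf.expectation q (\<lambda>v. (clip (m/8) v)^2)) / 2
    \<le> l * (- m / 4) + l^2 * (18 * cN N q * m^2) / 2"
    using second_moment_clip_eighth_le l by (intro add_mono mult_left_mono divide_right_mono) auto
  also have "\<dots> = - 1 / (576 * cN N q)"
    using c m_pos by (simp add: l_def field_simps power2_eq_square)
  finally have exponent: "l * b - l * real N * measure_pmf.expectation q (clip (m/8))
      + l^2 * real N * measure_pmf.expectation q (\<lambda>v. (clip (m/8) v)^2) / 2 \<le> - 1 / (576 * cN N q)"
    by (simp add: algebra_simps)
  have "measure_pmf.prob (offspring N q) {x. real (S_tot N x) - real (Max_off N x) < 1/8 * m}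
      = measure_pmf.prob (offspring N q)
          ({x. real (S_tot N x) - real (Max_off N x) < 1/8 * m} \<inter> set_pmf (offspring N q))"
    by (rule measure_Int_set_pmf[symmetric])
  also have "\<dots> \<le> measure_pmf.prob (offspring N q) {x. (\<Sum>k<N. clip (m/8) (x k)) < b}"
    using clip_eighth_sum_lt_of_max_dominates
    by (intro measure_pmf.finite_measure_mono) (auto simp: b_def)
  also have "\<dots> \<le> exp (l * b - l * real N * measure_pmf.expectation q (clip (m/8))
      + l^2 * real N * measure_pmf.expectation q (\<lambda>v. (clip (m/8) v)^2) / 2)"
    using m_pos by (intro prob_offspring_sum_less[where B="m/8"] l clip_nonneg clip_le) auto
  also have "\<dots> \<le> exp (- 1 / (576 * cN N q))"
    using exponent by simp
  finally show ?thesis .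
qed

end

section \<open>The limit N \<rightarrow> \<infinity>\<close>

lemma prob_S_tot_div_med_far_tendsto_0:
  assumes pos: "\<And>N. N \<ge> 1 \<Longrightarrow> set_pmf (q N) \<subseteq> {1..}"
    and c: "(\<lambda>N. cN N (q N)) \<longlonglongrightarrow> 0" and \<epsilon>: "\<epsilon> > 0"
  shows "(\<lambda>N. measure_pmf.prob (offspring N (q N))
    {x. \<bar>real (S_tot N x) / real (med N (q N)) - 1\<bar> > \<epsilon>}) \<longlonglongrightarrow> 0"
proof -
  define e where "e = \<epsilon> / 2"
  define h where "h N = 18 * cN N (q N) + 18 * cN N (q N) / e^2" for N
  have h: "h \<longlonglongrightarrow> 0" unfolding h_def using c \<epsilon> by (auto simp: e_def intro!: tendsto_eq_intros)
  have "eventually (\<lambda>N. h N < 1/2) sequentially" by (rule order_tendstoD(2)[OF h]) simp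
  moreover have "eventually (\<lambda>N. 2 \<le> N) sequentially" by (rule eventually_ge_at_top)
  ultimately have "eventually (\<lambda>N. measure_pmf.prob (offspring N (q N))
    {x. \<bar>real (S_tot N x) / real (med N (q N)) - 1\<bar> > \<epsilon>} \<le> h N) sequentially"
  proof eventually_elim
    case (elim N)
    interpret cannings_law N "q N" using elim pos by unfold_locales auto
    show ?case using prob_S_tot_div_m_far[of e] elim \<epsilon> by (simp add: e_def h_def)
  qed
  thus ?thesis by (intro tendsto_sandwich[OF _ _ tendsto_const h]) auto
qed

lemma prob_S_tot_minus_Max_small_div_cN_tendsto_0:
  assumes pos: "\<And>N. N \<ge> 1 \<Longrightarrow> set_pmf (q N) \<subseteq> {1..}"
    and c: "(\<lambda>N. cN N (q N)) \<longlonglongrightarrow> 0"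
  shows "(\<lambda>N. measure_pmf.prob (offspring N (q N))
    {x. real (S_tot N x) - real (Max_off N x) < 1/8 * real (med N (q N))} / cN N (q N)) \<longlonglongrightarrow> 0"
    (is "?f \<longlonglongrightarrow> 0")
proof -
  define K :: real where "K = 576"
  have "eventually (\<lambda>N. cN N (q N) \<le> 1/2400) sequentially"
    using order_tendstoD(2)[OF c, of "1/2400"] by (auto elim: eventually_mono)
  moreover have "eventually (\<lambda>N. 4 \<le> N) sequentially" by (rule eventually_ge_at_top)
  ultimately have bounds: "eventually (\<lambda>N. 0 \<le> ?f N \<and> ?f N \<le> 4 * K^2 * cN N (q N)) sequentially"
  proof eventually_elim
    case (elim N)
    interpret cannings_law N "q N" using elim pos by unfold_locales auto
    show ?case
    proof (cases "cN N (q N) = 0")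
      case False
      hence c_pos: "0 < cN N (q N)" using cN_nonneg[OF two_le_N offspring_pos] by simp
      have "?f N \<le> exp (- 1 / (K * cN N (q N))) / cN N (q N)"
        using prob_S_tot_minus_Max_small elim c_pos by (intro divide_right_mono) (auto simp: K_def)
      also have "\<dots> \<le> 4 * K^2 * cN N (q N)"
        using c_pos by (intro exp_neg_inverse_div_le) (auto simp: K_def)
      finally show ?thesis using c_pos by simp
    qed simp
  qed
  show ?thesis
  proof (rule tendsto_sandwich[of "\<lambda>_. 0" _ _ "\<lambda>N. 4 * K^2 * cN N (q N)"])
    show "eventually (\<lambda>N. 0 \<le> ?f N) sequentially" "eventually (\<lambda>N. ?f N \<le> 4 * K^2 * cN N (q N)) sequentially"
      using bounds by (auto elim: eventually_mono)
    show "(\<lambda>N. 4 * K^2 * cN N (q N)) \<longlonglongrightarrow> 0"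
      using tendsto_mult_right_zero[OF c, of "4 * K^2"] .
  qed simp
qed

theorem lemma2p3:
  fixes q :: "nat \<Rightarrow> nat pmf"
  assumes pos: "\<And>N. N \<ge> 1 \<Longrightarrow> set_pmf (q N) \<subseteq> {1..}"
    and c_lim: "(\<lambda>N. cN N (q N)) \<longlonglongrightarrow> 0"
  shows "\<exists>a :: nat \<Rightarrow> real. (\<forall>N\<ge>1. a N > 0) \<and>
    (\<forall>\<epsilon>>0. (\<lambda>N. measure_pmf.prob (offspring N (q N))
        {x. \<bar>real (S_tot N x) / a N - 1\<bar> > \<epsilon>}) \<longlonglongrightarrow> 0) \<and>
    (\<exists>\<delta>>0. (\<lambda>N. measure_pmf.prob (offspring N (q N))
        {x. real (S_tot N x) - real (Max_off N x) < \<delta> * a N} / cN N (q N)) \<longlonglongrightarrow> 0)"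
proof (intro exI[of _ "\<lambda>N. real (med N (q N))"] conjI allI impI exI[of _ "1/8"])
  show "0 < real (med N (q N))" if "N \<ge> 1" for N
    using med_ge_N[OF pos[OF that], of N] that by simp
qed (use prob_S_tot_div_med_far_tendsto_0[OF pos c_lim]
        prob_S_tot_minus_Max_small_div_cN_tendsto_0[OF pos c_lim] in auto)

end
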